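(* Let $(E,\{l_k\}_{k\in\mathbb N})$ be a Lie $\infty$-algebra. Then (i) the centroid of $E$ is closed under composition, contains $\mathrm{Id}_E$, and is contained in the set of strict non-abelian embedding tensors of the adjoint representation of $E$ (so it is a unital subalgebra, under composition, of the strict embedding algebra); (ii) every surjective strict non-abelian embedding tensor of the adjoint representation belongs to the centroid; (iii) the invertible elements of the centroid (those with a two-sided inverse in the centroid) are exactly the invertible elements of the strict embedding algebra (the strict non-abelian embedding tensors $T$ that are bijective with $T^{-1}$ also a strict non-abelian embedding tensor).
   Context: Lie $\infty$-algebras are in the shifted convention: a graded vector space $E$ over $\mathbb R$ or $\mathbb C$ with degree $+1$ graded-symmetric brackets $l_k:S^k(E)\to E$ forming a codifferential of the coshuffle coalgebra $\bar S(E)$. A strict non-abelian embedding tensor of the adjoint representation of $E$ is a degree $0$ linear map $T:E\to E$ such that $l_1\circ T=T\circ l_1$ and $l_n(T(x_1),\dots,T(x_n))=T\big(l_n(T(x_1),\dots,T(x_{n-1}),x_n)\big)$ for all $n\ge2$ and $x_1,\dots,x_n\in E$; the set of these maps, with composition, is called the strict embedding algebra. The centroid of $E$ is the set of degree $0$ linear maps $F:E\to E$ with $l_1\circ F=F\circ l_1$ and $\mathrm{ad}_x\circ F=F\circ\mathrm{ad}_x$ for all $x\in\bar S(E)$, where for $x=x_1\cdots x_k\in S^k(E)$, $\mathrm{ad}_x(y)=l_{k+1}(x_1,\dots,x_k,y)$. *)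

theory Defs
  imports Complex_Main
begin

text \<open>Lie infinity-algebras in the shifted convention, over a field 'k.
  The graded vector space E is the type 'v with scalar multiplication smul,
  graded by the family of subspaces Egr i (i :: int) whose direct sum is E.
  The brackets are l k :: 'v list => 'v, applied to lists of length k (k >= 1).\<close>

definition sgn_par :: "int \<Rightarrow> 'k::field" where
  "sgn_par m = (if even m then 1 else -1)"

definition graded_vs :: "('k::field \<Rightarrow> 'v::ab_group_add \<Rightarrow> 'v) \<Rightarrow> (int \<Rightarrow> 'v set) \<Rightarrow> bool" where
  "graded_vs smul Egr \<longleftrightarrow>
     Vector_Spaces.vector_space smul \<and>
     (\<forall>i. 0 \<in> Egr i \<and> (\<forall>x\<in>Egr i. \<forall>y\<in>Egr i. x + y \<in> Egr i) \<and> (\<forall>c. \<forall>x\<in>Egr i. smul c x \<in> Egr i)) \<and>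
     (\<forall>v. \<exists>!c. finite {i. c i \<noteq> 0} \<and> (\<forall>i. c i \<in> Egr i) \<and> v = (\<Sum>i\<in>{i. c i \<noteq> 0}. c i))"

definition deg0_linear :: "('k::field \<Rightarrow> 'v::ab_group_add \<Rightarrow> 'v) \<Rightarrow> (int \<Rightarrow> 'v set) \<Rightarrow> ('v \<Rightarrow> 'v) \<Rightarrow> bool" where
  "deg0_linear smul Egr F \<longleftrightarrow> Vector_Spaces.linear smul smul F \<and> (\<forall>i. F ` Egr i \<subseteq> Egr i)"

text \<open>Koszul sign of the unshuffle which puts the entries indexed by S (in increasing
  order) in front of the remaining entries of {..<n} (in increasing order),
  for entries of degrees d 0, ..., d (n-1).\<close>
definition koszul_unshuffle :: "(nat \<Rightarrow> int) \<Rightarrow> nat \<Rightarrow> nat set \<Rightarrow> 'k::field" where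
  "koszul_unshuffle d n S =
     sgn_par (\<Sum>a\<in>{..<n} - S. \<Sum>b\<in>S. if a < b then d a * d b else 0)"

definition lie_infty ::
  "('k::field \<Rightarrow> 'v::ab_group_add \<Rightarrow> 'v) \<Rightarrow> (int \<Rightarrow> 'v set) \<Rightarrow> (nat \<Rightarrow> 'v list \<Rightarrow> 'v) \<Rightarrow> bool" where
  "lie_infty smul Egr l \<longleftrightarrow>
     graded_vs smul Egr \<and>
     \<comment> \<open>each l k is multilinear\<close>
     (\<forall>k\<ge>1. \<forall>xs. length xs = k \<longrightarrow>
        (\<forall>j<k. Vector_Spaces.linear smul smul (\<lambda>v. l k (xs[j := v])))) \<and>
     \<comment> \<open>each l k has degree +1\<close>
     (\<forall>k\<ge>1. \<forall>xs d. length xs = k \<longrightarrow> (\<forall>j<k. xs ! j \<in> Egr (d j)) \<longrightarrow>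
        l k xs \<in> Egr ((\<Sum>j<k. d j) + 1)) \<and>
     \<comment> \<open>each l k is graded symmetric\<close>
     (\<forall>k\<ge>1. \<forall>xs d. length xs = k \<longrightarrow> (\<forall>j<k. xs ! j \<in> Egr (d j)) \<longrightarrow>
        (\<forall>j. j + 1 < k \<longrightarrow>
          l k (xs[j := xs ! (j + 1), j + 1 := xs ! j]) = smul (sgn_par (d j * d (j + 1))) (l k xs))) \<and>
     \<comment> \<open>the coderivation of the reduced symmetric coalgebra defined by the l k squares to zero
        (generalized Jacobi identities in the shifted convention)\<close>
     (\<forall>n\<ge>1. \<forall>xs d. length xs = n \<longrightarrow> (\<forall>j<n. xs ! j \<in> Egr (d j)) \<longrightarrow>
        (\<Sum>S\<in>Pow {..<n} - {{}}.
           smul (koszul_unshuffle d n S)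
             (l (n - card S + 1) (l (card S) (nths xs S) # nths xs ({..<n} - S)))) = 0)"

definition strict_emb_tensor ::
  "('k::field \<Rightarrow> 'v::ab_group_add \<Rightarrow> 'v) \<Rightarrow> (int \<Rightarrow> 'v set) \<Rightarrow> (nat \<Rightarrow> 'v list \<Rightarrow> 'v) \<Rightarrow> ('v \<Rightarrow> 'v) \<Rightarrow> bool" where
  "strict_emb_tensor smul Egr l T \<longleftrightarrow>
     deg0_linear smul Egr T \<and>
     (\<forall>x. l 1 [T x] = T (l 1 [x])) \<and>
     (\<forall>n\<ge>2. \<forall>xs y. length xs = n - 1 \<longrightarrow>
        l n (map T xs @ [T y]) = T (l n (map T xs @ [y])))"

text \<open>ad_x for x = x1...xk in S^k(E), k >= 1: ad_x y = l (k+1) (x1,...,xk,y);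
  since ad is linear in x and the monomials span the reduced symmetric algebra,
  commuting with all ad_x amounts to commuting with ad of every monomial.\<close>
definition ad :: "(nat \<Rightarrow> 'v list \<Rightarrow> 'v) \<Rightarrow> 'v list \<Rightarrow> 'v \<Rightarrow> 'v" where
  "ad l xs y = l (length xs + 1) (xs @ [y])"

definition centroid ::
  "('k::field \<Rightarrow> 'v::ab_group_add \<Rightarrow> 'v) \<Rightarrow> (int \<Rightarrow> 'v set) \<Rightarrow> (nat \<Rightarrow> 'v list \<Rightarrow> 'v) \<Rightarrow> ('v \<Rightarrow> 'v) \<Rightarrow> bool" where
  "centroid smul Egr l F \<longleftrightarrow>
     deg0_linear smul Egr F \<and>
     (\<forall>x. l 1 [F x] = F (l 1 [x])) \<and>
     (\<forall>xs. xs \<noteq> [] \<longrightarrow> ad l xs \<circ> F = F \<circ> ad l xs)"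

end

theory Submission
  imports Defs
begin

text \<open>A centroid element commutes with every ad_x, in particular with
  ad_x for x = T x_1 ... T x_(n-1), which is the embedding tensor identity. Conversely, if T is
  surjective then every monomial x is of the form T x_1 ... T x_k, so the embedding tensor
  identity says that T commutes with every ad_x. For (iii), a bijective T and its inverse are
  then both in the centroid.\<close>

lemma deg0_linear_comp:
  "deg0_linear smul Egr F \<Longrightarrow> deg0_linear smul Egr G \<Longrightarrow> deg0_linear smul Egr (F \<circ> G)"
  unfolding deg0_linear_def
  by (auto intro: Vector_Spaces.linear_compose simp: image_comp[symmetric] image_subset_iff)

lemma deg0_linear_id:
  "Vector_Spaces.vector_space smul \<Longrightarrow> deg0_linear smul Egr id"
  unfolding deg0_linear_def by (simp add: vector_space.linear_id)

lemma centroid_comp: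
  "centroid smul Egr l F \<Longrightarrow> centroid smul Egr l G \<Longrightarrow> centroid smul Egr l (F \<circ> G)"
  unfolding centroid_def by (auto simp: deg0_linear_comp fun_eq_iff)

lemma centroid_id:
  "Vector_Spaces.vector_space smul \<Longrightarrow> centroid smul Egr l id"
  unfolding centroid_def by (simp add: deg0_linear_id)

lemma centroid_imp_strict_emb_tensor:
  fixes F :: "'v::ab_group_add \<Rightarrow> 'v"
  assumes F: "centroid smul Egr l F"
  shows "strict_emb_tensor smul Egr l F"
  unfolding strict_emb_tensor_def
proof (intro conjI allI impI)
  show "deg0_linear smul Egr F" "\<And>x. l 1 [F x] = F (l 1 [x])"
    using F unfolding centroid_def by auto
  fix n :: nat and xs :: "'v list" and y
  assume n: "2 \<le> n" "length xs = n - 1"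
  then have "map F xs \<noteq> []" by auto
  with F have "ad l (map F xs) (F y) = F (ad l (map F xs) y)"
    unfolding centroid_def by (metis comp_apply)
  with n show "l n (map F xs @ [F y]) = F (l n (map F xs @ [y]))"
    by (simp add: ad_def)
qed

lemma strict_emb_tensor_surj_imp_centroid:
  fixes T :: "'v::ab_group_add \<Rightarrow> 'v"
  assumes T: "strict_emb_tensor smul Egr l T" and "surj T"
  shows "centroid smul Egr l T"
  unfolding centroid_def
proof (intro conjI allI impI)
  show "deg0_linear smul Egr T" "\<And>x. l 1 [T x] = T (l 1 [x])"
    using T unfolding strict_emb_tensor_def by auto
  fix xs :: "'v list"
  assume "xs \<noteq> []"
  obtain ys where ys: "xs = map T ys"
    using \<open>surj T\<close> by (metis map_idI surj_f_inv_f map_map comp_apply)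
  with \<open>xs \<noteq> []\<close> have "2 \<le> length ys + 1" by (cases ys) auto
  then have "l (length ys + 1) (map T ys @ [T y]) = T (l (length ys + 1) (map T ys @ [y]))" for y
    using T unfolding strict_emb_tensor_def by simp
  with ys show "ad l xs \<circ> T = T \<circ> ad l xs"
    by (simp add: ad_def fun_eq_iff)
qed

lemma centroid_invertible_iff:
  "(centroid smul Egr l F \<and> (\<exists>G. centroid smul Egr l G \<and> F \<circ> G = id \<and> G \<circ> F = id))
   \<longleftrightarrow> strict_emb_tensor smul Egr l F \<and> bij F \<and> strict_emb_tensor smul Egr l (inv F)"
proof
  assume "centroid smul Egr l F \<and> (\<exists>G. centroid smul Egr l G \<and> F \<circ> G = id \<and> G \<circ> F = id)"
  then obtain G where F: "centroid smul Egr l F" and G: "centroid smul Egr l G"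
    and FG: "F \<circ> G = id" and GF: "G \<circ> F = id" by blast
  from FG GF have "bij F" using o_bij by blast
  moreover from FG GF have "inv F = G" by (metis inv_unique_comp)
  ultimately show "strict_emb_tensor smul Egr l F \<and> bij F \<and> strict_emb_tensor smul Egr l (inv F)"
    using F G centroid_imp_strict_emb_tensor by metis
next
  assume T: "strict_emb_tensor smul Egr l F \<and> bij F \<and> strict_emb_tensor smul Egr l (inv F)"
  then have "bij F" "bij (inv F)" by (auto simp: bij_imp_bij_inv)
  with T have "centroid smul Egr l F" "centroid smul Egr l (inv F)"
    using strict_emb_tensor_surj_imp_centroid bij_is_surj by blast+
  moreover have "F \<circ> inv F = id" "inv F \<circ> F = id"
    using \<open>bij F\<close> bij_is_surj bij_is_inj surj_iff inj_iff by metis+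
  ultimately show "centroid smul Egr l F \<and> (\<exists>G. centroid smul Egr l G \<and> F \<circ> G = id \<and> G \<circ> F = id)"
    by blast
qed

theorem corollary3p18:
  fixes smul :: "'k::field \<Rightarrow> 'v::ab_group_add \<Rightarrow> 'v"
    and Egr :: "int \<Rightarrow> 'v set"
    and l :: "nat \<Rightarrow> 'v list \<Rightarrow> 'v"
  assumes "lie_infty smul Egr l"
  shows "((\<forall>F G. centroid smul Egr l F \<longrightarrow> centroid smul Egr l G \<longrightarrow> centroid smul Egr l (F \<circ> G))
          \<and> centroid smul Egr l id
          \<and> {F. centroid smul Egr l F} \<subseteq> {T. strict_emb_tensor smul Egr l T})
       \<and> (\<forall>T. strict_emb_tensor smul Egr l T \<longrightarrow> surj T \<longrightarrow> centroid smul Egr l T)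
       \<and> {F. centroid smul Egr l F \<and> (\<exists>G. centroid smul Egr l G \<and> F \<circ> G = id \<and> G \<circ> F = id)}
         = {T. strict_emb_tensor smul Egr l T \<and> bij T \<and> strict_emb_tensor smul Egr l (inv T)}"
proof -
  have "Vector_Spaces.vector_space smul"
    using assms by (simp add: lie_infty_def graded_vs_def)
  then show ?thesis
    by (auto simp: centroid_comp centroid_id centroid_imp_strict_emb_tensor
        strict_emb_tensor_surj_imp_centroid centroid_invertible_iff)
qed

end
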